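(* Let $\lambda,\mu>0$, let $X$ be the stationary birth–death process with rates $\lambda_n=\lambda$, $\mu_n=\mu n$ (marginal Poisson with mean $\lambda/\mu$), and $\Lambda(t)=\exp\{X(t)-\frac{\lambda}{\mu}(e-1)\}$. Then there is a constant $c>0$ such that for all $\tau\in\mathbb{R}$, $$c\,e^{-\mu|\tau|}\le \operatorname{Cov}(\Lambda(t),\Lambda(t+\tau))\le \operatorname{Var}(\Lambda(0))\,e^{-\mu|\tau|}.$$
   Context: The birth–death process is started in its stationary (Poisson) distribution, so $\Lambda$ is strictly stationary. *)

theory Defs
  imports "HOL-Probability.Probability"
begin

definition bd_Q :: "real \<Rightarrow> real \<Rightarrow> nat \<Rightarrow> nat \<Rightarrow> real" where
  "bd_Q lam mu i j =
     (if j = Suc i then lam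
      else if Suc j = i then mu * real i
      else if j = i then - (lam + mu * real i)
      else 0)"

definition is_transition_function_of ::
    "(real \<Rightarrow> nat \<Rightarrow> nat \<Rightarrow> real) \<Rightarrow> (nat \<Rightarrow> nat \<Rightarrow> real) \<Rightarrow> bool" where
  "is_transition_function_of P Q \<longleftrightarrow>
     (\<forall>t\<ge>0. \<forall>i j. 0 \<le> P t i j) \<and>
     (\<forall>t\<ge>0. \<forall>i. (\<lambda>j. P t i j) sums 1) \<and>
     (\<forall>i j. P 0 i j = (if i = j then 1 else 0)) \<and>
     (\<forall>s\<ge>0. \<forall>t\<ge>0. \<forall>i j. (\<lambda>k. P s i k * P t k j) sums P (s + t) i j) \<and>
     (\<forall>i j. ((\<lambda>h. P h i j) has_real_derivative Q i j) (at 0 within {0..}))"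

text \<open>X is a time-homogeneous Markov process on M with transition function P,
  started in the distribution pi0 at every time (stationary): all finite-dimensional
  distributions are given by pi0 and P.\<close>
definition stationary_markov_process ::
    "'a measure \<Rightarrow> (real \<Rightarrow> 'a \<Rightarrow> nat) \<Rightarrow> (nat \<Rightarrow> real)
       \<Rightarrow> (real \<Rightarrow> nat \<Rightarrow> nat \<Rightarrow> real) \<Rightarrow> bool" where
  "stationary_markov_process M X pi0 P \<longleftrightarrow>
     (\<forall>t. X t \<in> measurable M (count_space UNIV)) \<and>
     (\<forall>t ds ss. (\<forall>d\<in>set ds. 0 \<le> d) \<longrightarrow> length ss = Suc (length ds) \<longrightarrow>
        measure M {\<omega> \<in> space M. \<forall>k<length ss. X (t + sum_list (take k ds)) \<omega> = ss ! k}
          = pi0 (ss ! 0) * (\<Prod>k<length ds. P (ds ! k) (ss ! k) (ss ! Suc k)))"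

definition bd_Lambda :: "real \<Rightarrow> real \<Rightarrow> (real \<Rightarrow> 'a \<Rightarrow> nat) \<Rightarrow> real \<Rightarrow> 'a \<Rightarrow> real" where
  "bd_Lambda lam mu X t \<omega> = exp (real (X t \<omega>) - (lam / mu) * (exp 1 - 1))"

definition covariance :: "'a measure \<Rightarrow> ('a \<Rightarrow> real) \<Rightarrow> ('a \<Rightarrow> real) \<Rightarrow> real" where
  "covariance M f g =
     integral\<^sup>L M (\<lambda>\<omega>. (f \<omega> - integral\<^sup>L M f) * (g \<omega> - integral\<^sup>L M g))"

definition variance_of :: "'a measure \<Rightarrow> ('a \<Rightarrow> real) \<Rightarrow> real" where
  "variance_of M f = integral\<^sup>L M (\<lambda>\<omega>. (f \<omega> - integral\<^sup>L M f)\<^sup>2)"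

end

theory Submission
  imports Defs
begin

(* The covariance is computed in closed form,
     Cov(Lambda(t), Lambda(t + tau)) = exp (a * exp (- mu * |tau|)) - 1,   a = lam/mu * (e - 1)^2,
   and the two bounds follow from  a x <= exp (a x) - 1 <= (exp a - 1) x  for 0 <= x <= 1.
   The closed form rests on the generating functions of the transition probabilities,
     gf z t i = (SUM j. P t i j * z^j) = (1 - p + p z)^i * exp (lam/mu * (1 - p) * (z - 1)) = G z t i,
   where p = exp (- mu t).  The energy of the gap weighted by the Poisson(lam/mu) law,
      which is reversible for the generator, grows at most at rate 4 lam stat n on {..n}; letting
      n go to infinity gives gf = G (locale birth_death).
   3. Comparing power series coefficients, P t i j is a binomial law convolved with a Poisson law,
      so the generating function identity holds for every real z, in particular for z = e.
   4. The two-point law of the stationary process gives E Lambda = 1 and the mixed moment of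
      Lambda(t) and Lambda(t + tau), hence the covariance (locale stationary_birth_death). *)

lemma suminf_swap_nonneg:
  fixes f :: "nat \<Rightarrow> nat \<Rightarrow> real"
  assumes nn: "\<And>k j. 0 \<le> f k j" and s1: "\<And>k. summable (f k)"
    and s2: "summable (\<lambda>k. \<Sum>j. f k j)"
  shows "(\<Sum>j. \<Sum>k. f k j) = (\<Sum>k. \<Sum>j. f k j)"
proof -
  have rows: "\<And>k. ennreal (\<Sum>j. f k j) = (\<Sum>j. ennreal (f k j))"
    by (rule suminf_ennreal2[symmetric]) (use nn s1 in auto)
  have "(\<Sum>j. \<Sum>k. ennreal (f k j)) = (\<Sum>k. \<Sum>j. ennreal (f k j))"
  proof -
    have "(\<Sum>j. \<Sum>k. ennreal (f k j)) = (\<integral>\<^sup>+j. (\<Sum>k. ennreal (f k j)) \<partial>count_space UNIV)"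
      by (simp add: nn_integral_count_space_nat)
    also have "\<dots> = (\<Sum>k. \<integral>\<^sup>+j. ennreal (f k j) \<partial>count_space UNIV)"
      by (rule nn_integral_suminf) auto
    also have "\<dots> = (\<Sum>k. \<Sum>j. ennreal (f k j))"
      by (simp add: nn_integral_count_space_nat)
    finally show ?thesis .
  qed
  also have "\<dots> = ennreal (\<Sum>k. \<Sum>j. f k j)"
    unfolding rows[symmetric]
    by (rule suminf_ennreal2) (use nn s2 in \<open>auto intro: suminf_nonneg s1\<close>)
  finally have swapped: "(\<Sum>j. \<Sum>k. ennreal (f k j)) = ennreal (\<Sum>k. \<Sum>j. f k j)" .
  have cols: "summable (\<lambda>k. f k j)" for j
  proof -
    have "(\<Sum>k. ennreal (f k j)) \<le> (\<Sum>j. \<Sum>k. ennreal (f k j))"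
      using sum_le_suminf[OF summableI, of "{j}" "\<lambda>j. \<Sum>k. ennreal (f k j)"] by simp
    also have "\<dots> < top" using swapped by simp
    finally show ?thesis by (intro summable_suminf_not_top) (use nn in auto)
  qed
  have cols_ennreal: "(\<Sum>j. \<Sum>k. ennreal (f k j)) = (\<Sum>j. ennreal (\<Sum>k. f k j))"
    by (intro suminf_cong suminf_ennreal2) (use nn cols in auto)
  have summable_cols: "summable (\<lambda>j. \<Sum>k. f k j)"
    by (rule summable_suminf_not_top)
       (use swapped cols_ennreal nn in \<open>auto intro: suminf_nonneg cols\<close>)
  have "ennreal (\<Sum>j. \<Sum>k. f k j) = (\<Sum>j. ennreal (\<Sum>k. f k j))"
    by (rule suminf_ennreal2[symmetric])
       (use nn cols summable_cols in \<open>auto intro: suminf_nonneg\<close>)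
  then have "ennreal (\<Sum>j. \<Sum>k. f k j) = ennreal (\<Sum>k. \<Sum>j. f k j)"
    using swapped cols_ennreal by simp
  moreover have "0 \<le> (\<Sum>j. \<Sum>k. f k j)"
    by (intro suminf_nonneg summable_cols) (use nn cols in \<open>auto intro: suminf_nonneg\<close>)
  moreover have "0 \<le> (\<Sum>k. \<Sum>j. f k j)"
    by (intro suminf_nonneg s2) (use nn s1 in \<open>auto intro: suminf_nonneg\<close>)
  ultimately show ?thesis by simp
qed

lemma eventually_at_right_0_less: "0 < (s::real) \<Longrightarrow> eventually (\<lambda>h. h < s) (at_right 0)"
  by (subst eventually_at_right[of 0 s]) auto

lemma powser_zero_on_unit_interval:
  fixes d :: "nat \<Rightarrow> real"
  assumes abs_summable: "summable (\<lambda>j. \<bar>d j\<bar>)"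
    and zero: "\<And>z. 0 < z \<Longrightarrow> z \<le> 1 \<Longrightarrow> (\<Sum>j. d j * z ^ j) = 0"
  shows "d n = 0"
proof (induction n rule: less_induct)
  case (less n)
  define h where "h z = (\<Sum>j. d (j + n) * z ^ j)" for z :: real
  have shifted: "summable (\<lambda>j. \<bar>d (j + n)\<bar>)"
    using summable_ignore_initial_segment[OF abs_summable] .
  have h_zero: "h z = 0" if "0 < z" "z \<le> 1" for z
  proof -
    have bound: "\<bar>c * z ^ j\<bar> \<le> \<bar>c\<bar>" for c j
      using that by (auto simp: abs_mult intro!: mult_left_le power_le_one)
    have s: "summable (\<lambda>j. d j * z ^ j)"
      by (rule summable_comparison_test'[OF abs_summable, of 0]) (use bound in auto)
    have s_shift: "summable (\<lambda>j. d (j + n) * z ^ j)"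
      by (rule summable_comparison_test'[OF shifted, of 0]) (use bound in auto)
    have "0 = (\<Sum>j. d j * z ^ j)" using zero that by simp
    also have "\<dots> = (\<Sum>j. d (j + n) * z ^ (j + n)) + (\<Sum>j<n. d j * z ^ j)"
      by (rule suminf_split_initial_segment[OF s])
    also have "(\<Sum>j<n. d j * z ^ j) = 0" using less.IH by simp
    also have "(\<Sum>j. d (j + n) * z ^ (j + n)) = (\<Sum>j. z ^ n * (d (j + n) * z ^ j))"
      by (intro suminf_cong) (simp add: power_add algebra_simps)
    also have "\<dots> = z ^ n * h z" unfolding h_def by (rule suminf_mult[OF s_shift])
    finally show ?thesis using that by simp
  qed
  have "summable (\<lambda>j. d (j + n) * 1 ^ j)"
    using summable_rabs_cancel[OF shifted] by simp
  then have "isCont h 0" unfolding h_def by (rule isCont_powser) simp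
  then have "(h \<longlongrightarrow> h 0) (at_right 0)"
    by (simp add: isCont_def filterlim_at_split)
  moreover have "(h \<longlongrightarrow> 0) (at_right 0)"
  proof (subst tendsto_cong)
    show "\<forall>\<^sub>F x in at_right 0. h x = 0"
      using eventually_at_right_less[of "0::real"] eventually_at_right_0_less[OF zero_less_one]
      by eventually_elim (auto intro: h_zero)
  qed simp
  ultimately have "h 0 = 0" using tendsto_unique[of "at_right (0::real)"] by fastforce
  then show ?case unfolding h_def by simp
qed

lemma exp_scaled_minus_one_bounds:
  fixes a x :: real assumes "0 \<le> x" "x \<le> 1"
  shows "a * x \<le> exp (a * x) - 1" "exp (a * x) - 1 \<le> (exp a - 1) * x"
proof -
  show "a * x \<le> exp (a * x) - 1" using exp_ge_add_one_self[of "a * x"] by linarith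
  have "exp ((1 - x) *\<^sub>R 0 + x *\<^sub>R a) \<le> (1 - x) * exp 0 + x * exp a"
    by (rule convex_onD[OF exp_convex]) (use assms in auto)
  then show "exp (a * x) - 1 \<le> (exp a - 1) * x" by (simp add: algebra_simps)
qed

section \<open>Poisson and binomial weights\<close>

definition poisson_weight :: "real \<Rightarrow> nat \<Rightarrow> real" where
  "poisson_weight r m = r ^ m / fact m * exp (- r)"

lemma pmf_poisson_eq_weight: "r > 0 \<Longrightarrow> pmf (poisson_pmf r) m = poisson_weight r m"
  by (simp add: poisson_weight_def)

lemma poisson_weight_pos: "r > 0 \<Longrightarrow> 0 < poisson_weight r m"
  by (simp add: poisson_weight_def)

lemma poisson_weight_nonneg: "r \<ge> 0 \<Longrightarrow> 0 \<le> poisson_weight r m"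
  by (simp add: poisson_weight_def)

text \<open>Detailed balance: Poisson(r) is reversible for births at rate r and deaths at rate n.\<close>
lemma poisson_weight_detailed_balance:
  "poisson_weight r (Suc m) * real (Suc m) = r * poisson_weight r m"
  by (simp add: poisson_weight_def divide_simps del: of_nat_Suc)

lemma poisson_weight_tendsto_zero: "poisson_weight r \<longlonglongrightarrow> 0"
proof -
  have "(\<lambda>m. inverse (fact m) * r ^ m) \<longlonglongrightarrow> 0"
    by (rule summable_LIMSEQ_zero[OF summable_exp])
  then have "(\<lambda>m. inverse (fact m) * r ^ m * exp (- r)) \<longlonglongrightarrow> 0 * exp (- r)"
    by (intro tendsto_intros)
  then show ?thesis by (simp add: poisson_weight_def[abs_def] field_simps)
qed

lemma poisson_weight_gf: "(\<lambda>m. poisson_weight r m * z ^ m) sums exp (r * (z - 1))"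
proof -
  have "(\<lambda>m. (r * z) ^ m /\<^sub>R fact m) sums exp (r * z)" by (rule exp_converges)
  from sums_mult2[OF this, of "exp (- r)"] show ?thesis
    by (simp add: poisson_weight_def power_mult_distrib divide_inverse mult_ac
        right_diff_distrib flip: exp_add)
qed

lemma poisson_weight_gf_abs_summable: "summable (\<lambda>m. norm (poisson_weight r m * z ^ m))"
proof -
  have "summable (\<lambda>m. \<bar>r * z\<bar> ^ m /\<^sub>R fact m * exp (- r))"
    by (intro summable_mult2 sums_summable[OF exp_converges])
  then show ?thesis
    by (simp add: poisson_weight_def abs_mult power_abs power_mult_distrib divide_inverse mult_ac)
qed

definition binomial_weight :: "real \<Rightarrow> nat \<Rightarrow> nat \<Rightarrow> real" where
  "binomial_weight p i k = (if k \<le> i then real (i choose k) * p ^ k * (1 - p) ^ (i - k) else 0)"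

lemma binomial_weight_nonneg: "0 \<le> p \<Longrightarrow> p \<le> 1 \<Longrightarrow> 0 \<le> binomial_weight p i k"
  by (simp add: binomial_weight_def)

lemma binomial_weight_gf: "(\<lambda>k. binomial_weight p i k * z ^ k) sums (p * z + (1 - p)) ^ i"
proof -
  have "(\<lambda>k. binomial_weight p i k * z ^ k) sums (\<Sum>k\<le>i. binomial_weight p i k * z ^ k)"
    by (rule sums_finite) (auto simp: binomial_weight_def)
  also have "(\<Sum>k\<le>i. binomial_weight p i k * z ^ k) = (\<Sum>k\<le>i. real (i choose k) * (p * z) ^ k * (1 - p) ^ (i - k))"
    by (intro sum.cong) (auto simp: binomial_weight_def power_mult_distrib)
  also have "\<dots> = (p * z + (1 - p)) ^ i" by (rule binomial_ring[symmetric])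
  finally show ?thesis .
qed

text \<open>Binomial(i, p) convolved with Poisson(r): the law of a thinned population plus immigrants.\<close>
definition thinned_weight :: "real \<Rightarrow> real \<Rightarrow> nat \<Rightarrow> nat \<Rightarrow> real" where
  "thinned_weight p r i j = (\<Sum>k\<le>j. binomial_weight p i k * poisson_weight r (j - k))"

lemma thinned_weight_nonneg: "0 \<le> p \<Longrightarrow> p \<le> 1 \<Longrightarrow> 0 \<le> r \<Longrightarrow> 0 \<le> thinned_weight p r i j"
  unfolding thinned_weight_def
  by (intro sum_nonneg mult_nonneg_nonneg binomial_weight_nonneg poisson_weight_nonneg)

lemma thinned_weight_gf:
  "(\<lambda>j. thinned_weight p r i j * z ^ j) sums ((p * z + (1 - p)) ^ i * exp (r * (z - 1)))"
proof -
  define a where "a k = binomial_weight p i k * z ^ k" for k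
  define b where "b m = poisson_weight r m * z ^ m" for m
  have a_abs: "summable (\<lambda>k. norm (a k))"
    by (rule summable_finite[of "{..i}"]) (auto simp: a_def binomial_weight_def)
  have "(\<lambda>j. \<Sum>k\<le>j. a k * b (j - k)) sums ((\<Sum>k. a k) * (\<Sum>m. b m))"
    by (rule Cauchy_product_sums[OF a_abs]) (use poisson_weight_gf_abs_summable in \<open>simp add: b_def\<close>)
  moreover have "(\<Sum>k\<le>j. a k * b (j - k)) = thinned_weight p r i j * z ^ j" for j
    unfolding thinned_weight_def sum_distrib_right
  proof (intro sum.cong refl)
    fix k assume "k \<in> {..j}"
    then have "z ^ k * z ^ (j - k) = z ^ j" by (simp flip: power_add)
    then show "a k * b (j - k) = binomial_weight p i k * poisson_weight r (j - k) * z ^ j"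
      unfolding a_def b_def by (metis mult.assoc mult.left_commute)
  qed
  moreover have "(\<Sum>k. a k) = (p * z + (1 - p)) ^ i"
    using binomial_weight_gf sums_unique unfolding a_def by metis
  moreover have "(\<Sum>m. b m) = exp (r * (z - 1))"
    using poisson_weight_gf sums_unique unfolding b_def by metis
  ultimately show ?thesis by simp
qed

section \<open>Generating functions of a standard transition function\<close>

locale transition_function =
  fixes P :: "real \<Rightarrow> nat \<Rightarrow> nat \<Rightarrow> real" and Q :: "nat \<Rightarrow> nat \<Rightarrow> real"
  assumes transition: "is_transition_function_of P Q"
begin

lemma nonneg: "t \<ge> 0 \<Longrightarrow> 0 \<le> P t i j"
  using transition unfolding is_transition_function_of_def by blast

lemma rows_sums: "t \<ge> 0 \<Longrightarrow> (\<lambda>j. P t i j) sums 1"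
  using transition unfolding is_transition_function_of_def by blast

lemma P_zero: "P 0 i j = (if i = j then 1 else 0)"
  using transition unfolding is_transition_function_of_def by blast

lemma chapman_kolmogorov: "s \<ge> 0 \<Longrightarrow> t \<ge> 0 \<Longrightarrow> (\<lambda>k. P s i k * P t k j) sums P (s + t) i j"
  using transition unfolding is_transition_function_of_def by blast

lemma derivative_at_zero: "((\<lambda>h. P h i j) has_real_derivative Q i j) (at 0 within {0..})"
  using transition unfolding is_transition_function_of_def by blast

lemma rows_summable: "t \<ge> 0 \<Longrightarrow> summable (\<lambda>j. P t i j)"
  using rows_sums sums_summable by blast

lemma rows_sum: "t \<ge> 0 \<Longrightarrow> (\<Sum>j. P t i j) = 1"
  using rows_sums sums_unique by fastforce

lemma difference_quotient_limit:
  "((\<lambda>h. (P h i j - (if i = j then 1 else 0)) / h) \<longlongrightarrow> Q i j) (at_right 0)"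
proof -
  have "((\<lambda>y. (P y i j - P 0 i j) / (y - 0)) \<longlongrightarrow> Q i j) (at 0 within {0..})"
    using derivative_at_zero[of i j] unfolding has_field_derivative_iff .
  then have "((\<lambda>y. (P y i j - P 0 i j) / (y - 0)) \<longlongrightarrow> Q i j) (at 0 within {0<..})"
    by (rule tendsto_within_subset) auto
  then show ?thesis by (simp add: P_zero)
qed

lemma diagonal_limit: "((\<lambda>h. P h i i) \<longlongrightarrow> 1) (at_right 0)"
proof -
  have "((\<lambda>h. P h i i) \<longlongrightarrow> P 0 i i) (at 0 within {0..})"
    using DERIV_continuous[OF derivative_at_zero] by (simp add: continuous_within)
  then have "((\<lambda>h. P h i i) \<longlongrightarrow> P 0 i i) (at 0 within {0<..})"
    by (rule tendsto_within_subset) auto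
  then show ?thesis by (simp add: P_zero)
qed

lemma backward_quotient_split:
  fixes v :: "nat \<Rightarrow> real"
  assumes h: "h > 0" and i: "i < n" and bounded: "\<And>k. \<bar>v k\<bar> \<le> 1"
  shows "((\<Sum>k. P h i k * v k) - v i) / h
      = (\<Sum>k<n. (P h i k - (if i = k then 1 else 0)) / h * v k) + (\<Sum>k. P h i (k + n) * v (k + n)) / h"
    and "\<bar>(\<Sum>k. P h i (k + n) * v (k + n)) / h\<bar> \<le> - (\<Sum>k<n. (P h i k - (if i = k then 1 else 0)) / h)"
proof -
  define T where "T = (\<Sum>k. P h i (k + n) * v (k + n))"
  have weighted: "\<bar>P h i k * v k\<bar> \<le> P h i k" for k
    using h bounded nonneg[of h] by (auto simp: abs_mult intro!: mult_left_le)
  have "summable (\<lambda>k. P h i k * v k)"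
    by (rule summable_comparison_test'[OF rows_summable[of h i], of 0]) (use weighted h in auto)
  then have series: "(\<Sum>k. P h i k * v k) = T + (\<Sum>k<n. P h i k * v k)"
    unfolding T_def by (rule suminf_split_initial_segment)
  have diagonal: "v i = (\<Sum>k<n. (if i = k then 1 else 0) * v k)"
  proof -
    have "(\<Sum>k<n. (if i = k then 1 else 0) * v k) = (\<Sum>k<n. if i = k then v k else 0)"
      by (intro sum.cong) auto
    then show ?thesis using i by simp
  qed
  have "(\<Sum>k<n. (P h i k - (if i = k then 1 else 0)) / h * v k)
      = (\<Sum>k<n. (P h i k * v k - (if i = k then 1 else 0) * v k) / h)"
    by (intro sum.cong) (auto simp: algebra_simps diff_divide_distrib)
  also have "\<dots> = ((\<Sum>k<n. P h i k * v k) - (\<Sum>k<n. (if i = k then 1 else 0) * v k)) / h"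
    by (simp add: sum_divide_distrib[symmetric] sum_subtractf)
  finally show "((\<Sum>k. P h i k * v k) - v i) / h
      = (\<Sum>k<n. (P h i k - (if i = k then 1 else 0)) / h * v k) + T / h"
    unfolding series diagonal by (simp add: add_divide_distrib diff_divide_distrib)
  have tail_summable: "summable (\<lambda>k. P h i (k + n))"
    using rows_summable[of h i] h summable_ignore_initial_segment by auto
  have tail_abs: "summable (\<lambda>k. \<bar>P h i (k + n) * v (k + n)\<bar>)"
    by (rule summable_comparison_test'[OF tail_summable, of 0]) (use weighted in auto)
  have "\<bar>T\<bar> \<le> (\<Sum>k. \<bar>P h i (k + n) * v (k + n)\<bar>)"
    unfolding T_def by (rule summable_rabs[OF tail_abs])
  also have "\<dots> \<le> (\<Sum>k. P h i (k + n))" by (rule suminf_le[OF weighted tail_abs tail_summable])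
  also have "\<dots> = 1 - (\<Sum>k<n. P h i k)"
    using suminf_split_initial_segment[OF rows_summable[of h i], of n] rows_sum[of h i] h by simp
  also have "\<dots> = h * - (\<Sum>k<n. (P h i k - (if i = k then 1 else 0)) / h)"
    using i h by (simp add: sum_subtractf sum_divide_distrib[symmetric])
  finally show "\<bar>T / h\<bar> \<le> - (\<Sum>k<n. (P h i k - (if i = k then 1 else 0)) / h)"
    using h by (simp add: abs_divide pos_divide_le_eq mult.commute)
qed

text \<open>Limit of the backward difference quotient of a bounded family v: if row i of Q is
  conservative on the initial segment {..<n}, then (P h v_h - v_h)_i / h tends to (Q v_0)_i,
  because the escaping mass is o(h).\<close>
lemma backward_quotient_limit:
  fixes v :: "real \<Rightarrow> nat \<Rightarrow> real"
  assumes i: "i < n" and conservative: "(\<Sum>k<n. Q i k) = 0"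
    and lim: "\<And>k. ((\<lambda>h. v h k) \<longlongrightarrow> v0 k) (at_right 0)"
    and bounded: "eventually (\<lambda>h. \<forall>k. \<bar>v h k\<bar> \<le> 1) (at_right 0)"
  shows "((\<lambda>h. ((\<Sum>k. P h i k * v h k) - v h i) / h) \<longlongrightarrow> (\<Sum>k<n. Q i k * v0 k)) (at_right 0)"
proof -
  define D where "D h k = (P h i k - (if i = k then 1 else 0)) / h" for h k
  define T where "T h = (\<Sum>k. P h i (k + n) * v h (k + n))" for h
  define R where "R h = - (\<Sum>k<n. D h k)" for h
  have ev: "eventually (\<lambda>h. ((\<Sum>k. P h i k * v h k) - v h i) / h = (\<Sum>k<n. D h k * v h k) + T h / h
      \<and> \<bar>T h / h\<bar> \<le> R h) (at_right 0)"
    using bounded eventually_at_right_less[of 0]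
  proof eventually_elim
    case (elim h)
    then show ?case
      using backward_quotient_split[of h i n "v h"] i unfolding D_def T_def R_def by auto
  qed
  have "(R \<longlongrightarrow> - (\<Sum>k<n. Q i k)) (at_right 0)"
    unfolding R_def D_def by (intro tendsto_intros difference_quotient_limit)
  then have R_lim: "(R \<longlongrightarrow> 0) (at_right 0)" by (simp add: conservative)
  have "\<forall>\<^sub>F h in at_right 0. norm (T h / h) \<le> R h"
    using ev by (rule eventually_mono) simp
  then have tail: "((\<lambda>h. T h / h) \<longlongrightarrow> 0) (at_right 0)"
    using R_lim by (rule Lim_null_comparison)
  have head: "((\<lambda>h. \<Sum>k<n. D h k * v h k) \<longlongrightarrow> (\<Sum>k<n. Q i k * v0 k)) (at_right 0)"
    unfolding D_def by (intro tendsto_intros difference_quotient_limit lim)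
  have "((\<lambda>h. (\<Sum>k<n. D h k * v h k) + T h / h) \<longlongrightarrow> (\<Sum>k<n. Q i k * v0 k)) (at_right 0)"
    using tendsto_add[OF head tail] by simp
  then show ?thesis
  proof (rule Lim_transform_eventually)
    show "\<forall>\<^sub>F h in at_right 0. (\<Sum>k<n. D h k * v h k) + T h / h = ((\<Sum>k. P h i k * v h k) - v h i) / h"
      using ev by (rule eventually_mono) simp
  qed
qed

definition gf :: "real \<Rightarrow> real \<Rightarrow> nat \<Rightarrow> real" where
  "gf z t i = (\<Sum>j. P t i j * z ^ j)"

context
  fixes z :: real assumes z0: "0 \<le> z" and z1: "z \<le> 1"
begin

lemma gf_summable: "t \<ge> 0 \<Longrightarrow> summable (\<lambda>j. P t i j * z ^ j)"
  by (rule summable_comparison_test'[OF rows_summable[of t i], of 0])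
     (use z0 z1 nonneg in \<open>auto simp: abs_mult intro!: mult_left_le power_le_one\<close>)

lemma gf_bounds: "t \<ge> 0 \<Longrightarrow> 0 \<le> gf z t i \<and> gf z t i \<le> 1"
proof
  assume t: "t \<ge> 0"
  show "0 \<le> gf z t i"
    unfolding gf_def by (intro suminf_nonneg gf_summable t) (use z0 nonneg t in auto)
  have "gf z t i \<le> (\<Sum>j. P t i j)" unfolding gf_def
    by (intro suminf_le gf_summable rows_summable t)
       (use z0 z1 nonneg t in \<open>auto intro!: mult_left_le power_le_one\<close>)
  then show "gf z t i \<le> 1" using rows_sum t by simp
qed

lemma gf_zero: "gf z 0 i = z ^ i"
proof -
  have "(\<lambda>j. P 0 i j * z ^ j) = (\<lambda>j. if j = i then z ^ j else 0)"
    by (auto simp: P_zero)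
  then show ?thesis unfolding gf_def using sums_single[of i "\<lambda>j. z ^ j"] sums_unique by force
qed

lemma gf_chapman_kolmogorov:
  assumes h: "h \<ge> 0" and s: "s \<ge> 0"
  shows "summable (\<lambda>k. P h i k * gf z s k)" "gf z (h + s) i = (\<Sum>k. P h i k * gf z s k)"
proof -
  define f where "f k j = P h i k * (P s k j * z ^ j)" for k j
  have inner: "(\<Sum>j. f k j) = P h i k * gf z s k" for k
    unfolding f_def gf_def by (intro suminf_mult gf_summable s)
  show outer: "summable (\<lambda>k. P h i k * gf z s k)"
    by (rule summable_comparison_test'[OF rows_summable[of h i], of 0])
       (use h s nonneg gf_bounds in \<open>auto simp: abs_mult intro!: mult_left_le\<close>)
  have "(\<Sum>j. \<Sum>k. f k j) = (\<Sum>k. \<Sum>j. f k j)"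
  proof (rule suminf_swap_nonneg)
    show "summable (\<lambda>k. \<Sum>j. f k j)" using outer by (simp only: inner)
  qed (use h s z0 nonneg in \<open>auto simp: f_def intro: summable_mult gf_summable\<close>)
  moreover have "(\<Sum>k. f k j) = P (h + s) i j * z ^ j" for j
    unfolding f_def using sums_mult2[OF chapman_kolmogorov[OF h s, of i j], of "z ^ j"]
    by (simp add: sums_unique[symmetric] mult.assoc)
  ultimately show "gf z (h + s) i = (\<Sum>k. P h i k * gf z s k)"
    by (simp add: gf_def inner)
qed

lemma gf_increment:
  assumes h: "h \<ge> 0" and s: "s \<ge> 0"
  shows "\<bar>gf z (h + s) i - gf z s i\<bar> \<le> 1 - P h i i"
proof -
  have "(\<lambda>k. P h i k * gf z s i) sums (1 * gf z s i)" by (rule sums_mult2[OF rows_sums[OF h]])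
  then have D: "(\<lambda>k. P h i k * (gf z s k - gf z s i)) sums (gf z (h + s) i - gf z s i)"
    using sums_diff[OF summable_sums[OF gf_chapman_kolmogorov(1)[OF h s]]] gf_chapman_kolmogorov(2)[OF h s]
    by (simp add: algebra_simps)
  have "(\<lambda>k. P h i k - (if k = i then P h i i else 0)) sums (1 - P h i i)"
    by (rule sums_diff[OF rows_sums[OF h] sums_single])
  then have G: "(\<lambda>k. if k = i then 0 else P h i k) sums (1 - P h i i)"
    by (simp add: if_distrib cong: if_cong)
  have B: "\<bar>P h i k * (gf z s k - gf z s i)\<bar> \<le> (if k = i then 0 else P h i k)" for k
  proof -
    have "\<bar>gf z s k - gf z s i\<bar> \<le> 1" using gf_bounds[OF s, of k] gf_bounds[OF s, of i]
      by (auto simp: abs_le_iff)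
    then show ?thesis using nonneg[OF h, of i k] by (auto simp: abs_mult intro: mult_left_le)
  qed
  have Sabs: "summable (\<lambda>k. \<bar>P h i k * (gf z s k - gf z s i)\<bar>)"
    by (rule summable_comparison_test'[OF sums_summable[OF G], of 0]) (use B in auto)
  have "\<bar>gf z (h + s) i - gf z s i\<bar> \<le> (\<Sum>k. \<bar>P h i k * (gf z s k - gf z s i)\<bar>)"
    using summable_rabs[OF Sabs] sums_unique[OF D] by simp
  also have "\<dots> \<le> (\<Sum>k. if k = i then 0 else P h i k)"
    by (rule suminf_le[OF B Sabs sums_summable[OF G]])
  also have "\<dots> = 1 - P h i i" using G sums_unique by fastforce
  finally show ?thesis .
qed

lemma gf_continuous_within: assumes s: "s \<ge> 0"
  shows "((\<lambda>t. gf z t i) \<longlongrightarrow> gf z s i) (at s within {0..})"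
proof -
  have increment: "\<bar>gf z t i - gf z s i\<bar> \<le> 1 - P \<bar>t - s\<bar> i i" if "t \<ge> 0" for t
    using gf_increment[of "t - s" s i] gf_increment[of "s - t" t i] that s
    by (cases "s \<le> t") (auto simp: abs_minus_commute)
  have "filterlim (\<lambda>t. \<bar>t - s\<bar>) (at_right 0) (at s within {0..})"
    unfolding filterlim_at
  proof
    show "\<forall>\<^sub>F x in at s within {0..}. \<bar>x - s\<bar> \<in> {0<..} \<and> \<bar>x - s\<bar> \<noteq> 0"
      by (auto simp: eventually_at_filter)
    have "((\<lambda>t. \<bar>t - s\<bar>) \<longlongrightarrow> \<bar>s - s\<bar>) (at s within {0..})"
      by (intro tendsto_intros)
    then show "((\<lambda>t. \<bar>t - s\<bar>) \<longlongrightarrow> 0) (at s within {0..})" by simp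
  qed
  then have "((\<lambda>t. P \<bar>t - s\<bar> i i) \<longlongrightarrow> 1) (at s within {0..})"
    by (rule filterlim_compose[OF diagonal_limit])
  then have "((\<lambda>t. 1 - P \<bar>t - s\<bar> i i) \<longlongrightarrow> 0) (at s within {0..})"
    using tendsto_diff[OF tendsto_const[of 1]] by fastforce
  then have "((\<lambda>t. gf z t i - gf z s i) \<longlongrightarrow> 0) (at s within {0..})"
    by (rule Lim_null_comparison[rotated]) (use increment in \<open>auto simp: eventually_at_filter\<close>)
  then show ?thesis by (rule LIM_zero_cancel)
qed

lemma gf_continuous_on: "continuous_on {0..} (\<lambda>t. gf z t i)"
  unfolding continuous_on_def using gf_continuous_within by auto

lemma gf_right_quotient:
  assumes s: "s \<ge> 0" and i: "i < n" and conservative: "(\<Sum>k<n. Q i k) = 0"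
  shows "((\<lambda>h. (gf z (s + h) i - gf z s i) / h) \<longlongrightarrow> (\<Sum>k<n. Q i k * gf z s k)) (at_right 0)"
proof -
  have "((\<lambda>h. ((\<Sum>k. P h i k * gf z s k) - gf z s i) / h) \<longlongrightarrow> (\<Sum>k<n. Q i k * gf z s k)) (at_right 0)"
    by (rule backward_quotient_limit[OF i conservative]) (use gf_bounds s in auto)
  then show ?thesis
  proof (rule Lim_transform_eventually)
    show "\<forall>\<^sub>F h in at_right 0. ((\<Sum>k. P h i k * gf z s k) - gf z s i) / h = (gf z (s + h) i - gf z s i) / h"
      using eventually_at_right_less[of 0]
      by (rule eventually_mono) (use s in \<open>simp add: gf_chapman_kolmogorov(2) add.commute\<close>)
  qed
qed

lemma gf_left_quotient:
  assumes s: "s > 0" and i: "i < n" and conservative: "(\<Sum>k<n. Q i k) = 0"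
  shows "((\<lambda>h. (gf z (s - h) i - gf z s i) / - h) \<longlongrightarrow> (\<Sum>k<n. Q i k * gf z s k)) (at_right 0)"
proof -
  have "filterlim (\<lambda>h. s - h) (at s within {0..}) (at_right 0)"
    unfolding filterlim_at
  proof
    show "\<forall>\<^sub>F x in at_right 0. s - x \<in> {0..} \<and> s - x \<noteq> s"
      using eventually_at_right_less[of 0] eventually_at_right_0_less[OF s]
      by eventually_elim auto
    have "((\<lambda>h. s - h) \<longlongrightarrow> s - 0) (at_right 0)" by (intro tendsto_intros)
    then show "((\<lambda>h. s - h) \<longlongrightarrow> s) (at_right 0)" by simp
  qed
  then have lim: "((\<lambda>h. gf z (s - h) k) \<longlongrightarrow> gf z s k) (at_right 0)" for k
    by (rule filterlim_compose[OF gf_continuous_within[OF less_imp_le[OF s]]])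
  have bounded: "\<forall>\<^sub>F h in at_right 0. \<forall>k. \<bar>gf z (s - h) k\<bar> \<le> 1"
    using eventually_at_right_0_less[OF s]
    by eventually_elim (use gf_bounds in \<open>auto simp: abs_le_iff\<close>)
  have "((\<lambda>h. ((\<Sum>k. P h i k * gf z (s - h) k) - gf z (s - h) i) / h) \<longlongrightarrow> (\<Sum>k<n. Q i k * gf z s k)) (at_right 0)"
    by (rule backward_quotient_limit[OF i conservative lim bounded])
  then show ?thesis
  proof (rule Lim_transform_eventually)
    show "\<forall>\<^sub>F h in at_right 0. ((\<Sum>k. P h i k * gf z (s - h) k) - gf z (s - h) i) / h
        = (gf z (s - h) i - gf z s i) / - h"
      using eventually_at_right_less[of 0] eventually_at_right_0_less[OF s]
    proof eventually_elim
      case (elim h)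
      then have "gf z (h + (s - h)) i = (\<Sum>k. P h i k * gf z (s - h) k)"
        using gf_chapman_kolmogorov(2)[of h "s - h" i] by auto
      then show ?case by (simp add: divide_simps)
    qed
  qed
qed

lemma gf_backward_equation:
  assumes s: "s > 0" and i: "i < n" and conservative: "(\<Sum>k<n. Q i k) = 0"
  shows "((\<lambda>t. gf z t i) has_real_derivative (\<Sum>k<n. Q i k * gf z s k)) (at s)"
  unfolding DERIV_def filterlim_at_split filterlim_at_left_to_right[of _ _ 0]
  using gf_right_quotient[OF less_imp_le[OF s] i conservative] gf_left_quotient[OF s i conservative]
  by simp

end

end

section \<open>The birth-death generator\<close>

lemma bd_Q_apply:
  "(\<Sum>k<Suc (Suc i). bd_Q lam mu i k * x k)
     = lam * x (Suc i) + mu * real i * x (i - 1) - (lam + mu * real i) * x i"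
proof (cases i)
  case 0 then show ?thesis by (simp add: bd_Q_def algebra_simps)
next
  case (Suc m)
  have "(\<Sum>k<Suc (Suc i). bd_Q lam mu i k * x k) = (\<Sum>k<m. bd_Q lam mu i k * x k)
     + bd_Q lam mu i m * x m + bd_Q lam mu i i * x i + bd_Q lam mu i (Suc i) * x (Suc i)"
    using Suc by (simp add: algebra_simps)
  also have "(\<Sum>k<m. bd_Q lam mu i k * x k) = 0"
    using Suc by (intro sum.neutral) (auto simp: bd_Q_def)
  finally show ?thesis using Suc by (simp add: bd_Q_def algebra_simps)
qed

lemma bd_Q_conservative: "(\<Sum>k<Suc (Suc i). bd_Q lam mu i k) = 0"
  using bd_Q_apply[of lam mu i "\<lambda>_. 1"] by (simp add: algebra_simps)

text \<open>Summation by parts against weights in detailed balance with the generator: the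
  Dirichlet form on {..n} is nonpositive up to a boundary term at n.\<close>
lemma bd_dirichlet_identity:
  fixes x w :: "nat \<Rightarrow> real"
  assumes balance: "\<And>i. w (Suc i) * (mu * real (Suc i)) = lam * w i"
  shows "(\<Sum>i<Suc n. w i * x i * (lam * x (Suc i) + mu * real i * x (i - 1) - (lam + mu * real i) * x i))
     = - lam * (\<Sum>i<n. w i * (x (Suc i) - x i)^2) + lam * w n * x n * (x (Suc n) - x n)"
proof (induction n)
  case 0 then show ?case by (simp add: algebra_simps)
next
  case (Suc n)
  have "w (Suc n) * x (Suc n) * (lam * x (Suc (Suc n)) + mu * real (Suc n) * x n - (lam + mu * real (Suc n)) * x (Suc n))
     = lam * w (Suc n) * x (Suc n) * (x (Suc (Suc n)) - x (Suc n)) + (w (Suc n) * (mu * real (Suc n))) * x (Suc n) * (x n - x (Suc n))"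
    by (simp add: algebra_simps)
  also have "\<dots> = lam * w (Suc n) * x (Suc n) * (x (Suc (Suc n)) - x (Suc n)) + lam * w n * x (Suc n) * (x n - x (Suc n))"
    by (simp only: balance)
  finally show ?case using Suc by (simp add: algebra_simps power2_eq_square)
qed

locale birth_death = transition_function P "bd_Q lam mu"
  for P :: "real \<Rightarrow> nat \<Rightarrow> nat \<Rightarrow> real" and lam mu :: real +
  assumes lam_pos: "lam > 0" and mu_pos: "mu > 0"
begin

abbreviation stat :: "nat \<Rightarrow> real" where "stat \<equiv> poisson_weight (lam / mu)"

lemma stat_pos: "stat i > 0"
  using lam_pos mu_pos by (simp add: poisson_weight_pos)

lemma stat_detailed_balance: "stat (Suc i) * (mu * real (Suc i)) = lam * stat i"
  using poisson_weight_detailed_balance[of "lam / mu" i] mu_pos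
  by (simp add: field_simps)

text \<open>The backward equation for the birth-death generator, whose row i is conservative on
  {..i+1}.\<close>
lemma gf_bd_backward_equation:
  assumes "0 \<le> z" "z \<le> 1" "s > 0"
  shows "((\<lambda>t. gf z t i) has_real_derivative (\<Sum>k<Suc (Suc i). bd_Q lam mu i k * gf z s k)) (at s)"
  using gf_backward_equation[OF assms, of i "Suc (Suc i)"] bd_Q_conservative by simp

text \<open>The candidate generating function: after time t each of the i initial individuals
  survives with probability p = exp(-mu t), independently of a Poisson(lam/mu (1 - p))
  number of immigrants still present.\<close>
definition G :: "real \<Rightarrow> real \<Rightarrow> nat \<Rightarrow> real" where
  "G z t i = (1 - exp (- mu * t) + exp (- mu * t) * z) ^ i * exp (lam / mu * (1 - exp (- mu * t)) * (z - 1))"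

lemma G_zero: "G z 0 i = z ^ i" unfolding G_def by simp

lemma G_backward_equation:
  "((\<lambda>t. G z t i) has_real_derivative (\<Sum>k<Suc (Suc i). bd_Q lam mu i k * G z t k)) (at t)"
proof -
  define p where "p = exp (- mu * t)"
  define B where "B = 1 - p + p * z"
  define E where "E = exp (lam / mu * (1 - p) * (z - 1))"
  have dB: "((\<lambda>t. 1 - exp (- mu * t) + exp (- mu * t) * z) has_real_derivative (mu * p * (1 - z))) (at t)"
    by (rule derivative_eq_intros refl | simp)+ (simp add: p_def algebra_simps)
  have dE: "((\<lambda>t. lam / mu * (1 - exp (- mu * t)) * (z - 1)) has_real_derivative (lam * p * (z - 1))) (at t)"
    by (rule derivative_eq_intros refl | simp)+ (use mu_pos in \<open>simp add: p_def field_simps\<close>)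
  have "((\<lambda>t. G z t i) has_real_derivative
      (real i * B ^ (i - 1) * (mu * p * (1 - z)) * E + E * (lam * p * (z - 1)) * B ^ i)) (at t)"
    using DERIV_mult[OF DERIV_power[OF dB, of i] DERIV_exp[THEN DERIV_chain2, OF dE]]
    unfolding G_def by (simp add: B_def E_def p_def mult_ac)
  also have "real i * B ^ (i - 1) * (mu * p * (1 - z)) * E + E * (lam * p * (z - 1)) * B ^ i
      = lam * G z t (Suc i) + mu * real i * G z t (i - 1) - (lam + mu * real i) * G z t i"
    by (cases i) (simp_all add: G_def B_def E_def p_def algebra_simps)
  finally show ?thesis by (simp only: bd_Q_apply)
qed

lemma G_bounds: assumes "t \<ge> 0" "0 \<le> z" "z \<le> 1" shows "0 \<le> G z t i \<and> G z t i \<le> 1"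
proof -
  define p where "p = exp (- mu * t)"
  have p: "0 < p" "p \<le> 1" unfolding p_def using assms mu_pos by auto
  have base: "0 \<le> 1 - p + p * z" "1 - p + p * z \<le> 1"
    using p assms by (auto simp: add_nonneg_nonneg mult_left_le)
  have "lam / mu * (1 - p) * (z - 1) \<le> 0"
    using lam_pos mu_pos p assms by (intro mult_nonneg_nonpos) auto
  then show ?thesis unfolding G_def p_def[symmetric]
    using base by (auto intro!: mult_le_one power_le_one)
qed

definition gap :: "real \<Rightarrow> real \<Rightarrow> nat \<Rightarrow> real" where
  "gap z s k = gf z s k - G z s k"

context
  fixes z :: real assumes z0: "0 \<le> z" and z1: "z \<le> 1"
begin

lemma gap_bound: "s \<ge> 0 \<Longrightarrow> \<bar>gap z s k\<bar> \<le> 1"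
  unfolding gap_def using gf_bounds[OF z0 z1, of s k] G_bounds[of s z k] z0 z1 by auto

lemma gap_zero: "gap z 0 k = 0"
  unfolding gap_def using gf_zero[OF z0 z1] G_zero by simp

lemma gap_backward_equation:
  "s > 0 \<Longrightarrow> ((\<lambda>s. gap z s k) has_real_derivative (\<Sum>j<Suc (Suc k). bd_Q lam mu k j * gap z s j)) (at s)"
  unfolding gap_def
  using DERIV_diff[OF gf_bd_backward_equation[OF z0 z1] G_backward_equation]
  by (simp add: sum_subtractf right_diff_distrib)

lemma gap_continuous_on: "continuous_on {0..t} (\<lambda>s. gap z s k)"
proof -
  have "continuous_on {0..t} (\<lambda>s. G z s k)"
    using G_backward_equation by (intro continuous_at_imp_continuous_on ballI DERIV_isCont) blast
  then show ?thesis unfolding gap_def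
    by (intro continuous_on_diff continuous_on_subset[OF gf_continuous_on[OF z0 z1]]) auto
qed

definition energy :: "nat \<Rightarrow> real \<Rightarrow> real" where
  "energy n s = (\<Sum>k<Suc n. stat k * (gap z s k)^2)"

definition energy_rate :: "nat \<Rightarrow> real \<Rightarrow> real" where
  "energy_rate n s = (\<Sum>k<Suc n. stat k * (2 * gap z s k * (\<Sum>j<Suc (Suc k). bd_Q lam mu k j * gap z s j)))"

lemma energy_derivative:
  "s > 0 \<Longrightarrow> (energy n has_real_derivative energy_rate n s) (at s)"
proof -
  assume s: "s > 0"
  have "((\<lambda>s. stat k * (gap z s k)^2) has_real_derivative
      stat k * (2 * gap z s k * (\<Sum>j<Suc (Suc k). bd_Q lam mu k j * gap z s j))) (at s)" for k
    by (rule DERIV_cong, rule DERIV_cmult, rule DERIV_power, rule gap_backward_equation[OF s])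
       (simp del: sum.lessThan_Suc)
  then show ?thesis unfolding energy_def[abs_def] energy_rate_def by (rule DERIV_sum)
qed

text \<open>Reversibility turns the energy rate into a nonpositive Dirichlet form plus a boundary
  term at n, which is at most 4 lam stat n because the gap is bounded by 1.\<close>
lemma energy_rate_bound: assumes s: "s > 0" shows "energy_rate n s \<le> 4 * lam * stat n"
proof -
  define x where "x = gap z s"
  have "energy_rate n s = 2 * (\<Sum>k<Suc n. stat k * x k * (lam * x (Suc k) + mu * real k * x (k - 1) - (lam + mu * real k) * x k))"
    unfolding energy_rate_def x_def bd_Q_apply by (simp add: sum_distrib_left algebra_simps)
  also have "\<dots> = 2 * (- lam * (\<Sum>k<n. stat k * (x (Suc k) - x k)^2) + lam * stat n * x n * (x (Suc n) - x n))"
    by (simp only: bd_dirichlet_identity[OF stat_detailed_balance])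
  also have "\<dots> \<le> 2 * (lam * stat n * (x n * (x (Suc n) - x n)))"
    using lam_pos stat_pos by (simp add: sum_nonneg less_imp_le)
  also have "\<dots> \<le> 2 * (lam * stat n * 2)"
  proof -
    have "x n * (x (Suc n) - x n) \<le> \<bar>x n\<bar> * \<bar>x (Suc n) - x n\<bar>"
      by (metis abs_ge_self abs_mult)
    also have "\<dots> \<le> 1 * 2"
      using gap_bound[of s n] gap_bound[of s "Suc n"] s unfolding x_def by (intro mult_mono) auto
    finally show ?thesis using lam_pos stat_pos[of n] by simp
  qed
  finally show ?thesis by simp
qed

lemma energy_bound: assumes t: "t > 0" shows "energy n t \<le> 4 * lam * stat n * t"
proof -
  have "continuous_on {0..t} (energy n)"
    unfolding energy_def[abs_def]
    by (intro continuous_on_sum continuous_on_mult continuous_on_const continuous_on_power gap_continuous_on)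
  moreover have "\<And>s. 0 < s \<Longrightarrow> s < t \<Longrightarrow> energy n differentiable (at s)"
    using energy_derivative real_differentiable_def by blast
  ultimately obtain l s where s: "0 < s" "s < t" and l: "(energy n has_real_derivative l) (at s)"
    and mvt: "energy n t - energy n 0 = (t - 0) * l"
    using MVT[OF t] by blast
  have "l = energy_rate n s" using DERIV_unique[OF l energy_derivative[OF s(1)]] .
  then have "l \<le> 4 * lam * stat n" using energy_rate_bound[OF s(1)] by simp
  moreover have "energy n 0 = 0" unfolding energy_def by (simp add: gap_zero)
  ultimately show ?thesis using mvt t by (simp add: mult.commute mult_left_mono)
qed

text \<open>Letting n \<rightarrow> \<infinity> in the energy bound: the gap vanishes.\<close>
lemma gf_eq_G: assumes t: "t \<ge> 0" shows "gf z t i = G z t i"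
proof (cases "t = 0")
  case True then show ?thesis using gf_zero[OF z0 z1] G_zero by simp
next
  case False
  then have t: "t > 0" using t by simp
  have "stat i * (gap z t i)^2 \<le> energy n t" if "i \<le> n" for n
    unfolding energy_def using that stat_pos by (intro member_le_sum) (auto simp: less_imp_le)
  then have bound: "\<forall>\<^sub>F n in sequentially. stat i * (gap z t i)^2 \<le> 4 * lam * stat n * t"
    using energy_bound[OF t] unfolding eventually_sequentially by (meson order_trans)
  have "(\<lambda>n. 4 * lam * stat n * t) \<longlonglongrightarrow> 4 * lam * 0 * t"
    by (intro tendsto_intros poisson_weight_tendsto_zero)
  then have "stat i * (gap z t i)^2 \<le> 0"
    using bound by (intro tendsto_lowerbound) auto
  then show ?thesis using stat_pos[of i] by (simp add: gap_def mult_le_0_iff)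
qed

end

lemma G_thinned_form:
  "G z t i = (exp (- mu * t) * z + (1 - exp (- mu * t))) ^ i * exp (lam / mu * (1 - exp (- mu * t)) * (z - 1))"
  unfolding G_def by (simp add: algebra_simps)

text \<open>The transition probabilities are the thinned-Poisson weights: both sides have the same
  generating function on (0,1].\<close>
lemma P_eq_thinned_weight:
  assumes t: "t \<ge> 0"
  shows "P t i j = thinned_weight (exp (- mu * t)) (lam / mu * (1 - exp (- mu * t))) i j"
proof -
  define c where "c = thinned_weight (exp (- mu * t)) (lam / mu * (1 - exp (- mu * t))) i"
  have c_gf: "(\<lambda>j. c j * z ^ j) sums G z t i" for z
    unfolding c_def G_thinned_form by (rule thinned_weight_gf)
  have c_nonneg: "0 \<le> c j" for j
    unfolding c_def using t mu_pos lam_pos by (intro thinned_weight_nonneg) auto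
  define d where "d j = P t i j - c j" for j
  have "summable (\<lambda>j. P t i j + c j)"
    using summable_add[OF rows_summable[OF t] sums_summable[OF c_gf[of 1]]] by simp
  then have abs_summable: "summable (\<lambda>j. \<bar>d j\<bar>)"
    by (rule summable_comparison_test'[of _ 0])
       (use nonneg[OF t] c_nonneg in \<open>simp add: d_def abs_le_iff\<close>)
  have "d j = 0"
  proof (rule powser_zero_on_unit_interval[OF abs_summable])
    fix z :: real assume z: "0 < z" "z \<le> 1"
    have "(\<lambda>j. P t i j * z ^ j - c j * z ^ j) sums (gf z t i - G z t i)"
      using sums_diff[OF summable_sums[OF gf_summable] c_gf] z t by (simp add: gf_def)
    then have "(\<lambda>j. d j * z ^ j) sums 0"
      using gf_eq_G[of z t i] z t by (simp add: d_def algebra_simps)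
    then show "(\<Sum>j. d j * z ^ j) = 0" by (rule sums_unique[symmetric])
  qed
  then show ?thesis by (simp add: d_def c_def)
qed

lemma P_gf: assumes "t \<ge> 0" shows "(\<lambda>j. P t i j * z ^ j) sums G z t i"
  unfolding P_eq_thinned_weight[OF assms] G_thinned_form by (rule thinned_weight_gf)

end

section \<open>Expectations of functions of two integer-valued random variables\<close>

lemma nn_integral_pair_count:
  fixes Y Z :: "'a \<Rightarrow> nat" and f :: "nat \<Rightarrow> nat \<Rightarrow> ennreal"
  assumes Y: "Y \<in> M \<rightarrow>\<^sub>M count_space UNIV" and Z: "Z \<in> M \<rightarrow>\<^sub>M count_space UNIV"
  shows "(\<integral>\<^sup>+\<omega>. f (Y \<omega>) (Z \<omega>) \<partial>M)
       = (\<Sum>i. \<Sum>j. f i j * emeasure M {\<omega>\<in>space M. Y \<omega> = i \<and> Z \<omega> = j})"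
proof -
  define A where "A i j = {\<omega>\<in>space M. Y \<omega> = i \<and> Z \<omega> = j}" for i j
  have A_sets: "A i j \<in> sets M" for i j
  proof -
    have "A i j = (Y -` {i} \<inter> space M) \<inter> (Z -` {j} \<inter> space M)" unfolding A_def by auto
    then show ?thesis using measurable_sets[OF Y, of "{i}"] measurable_sets[OF Z, of "{j}"] by auto
  qed
  have inner: "(\<Sum>j. f i j * indicator (A i j) \<omega>) = (if Y \<omega> = i then f i (Z \<omega>) else 0)"
    if "\<omega> \<in> space M" for i \<omega>
  proof -
    have "(\<Sum>j. f i j * indicator (A i j) \<omega>) = (\<Sum>j\<in>{Z \<omega>}. f i j * indicator (A i j) \<omega>)"
      by (rule suminf_finite) (auto simp: A_def indicator_def)
    then show ?thesis using that by (simp add: A_def indicator_def)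
  qed
  have pointwise: "f (Y \<omega>) (Z \<omega>) = (\<Sum>i. \<Sum>j. f i j * indicator (A i j) \<omega>)"
    if "\<omega> \<in> space M" for \<omega>
  proof -
    have "(\<Sum>i. \<Sum>j. f i j * indicator (A i j) \<omega>) = (\<Sum>i\<in>{Y \<omega>}. \<Sum>j. f i j * indicator (A i j) \<omega>)"
      by (rule suminf_finite) (auto simp: inner[OF that])
    then show ?thesis by (simp add: inner[OF that])
  qed
  have "(\<integral>\<^sup>+\<omega>. f (Y \<omega>) (Z \<omega>) \<partial>M) = (\<integral>\<^sup>+\<omega>. (\<Sum>i. \<Sum>j. f i j * indicator (A i j) \<omega>) \<partial>M)"
    by (rule nn_integral_cong) (simp add: pointwise)
  also have "\<dots> = (\<Sum>i. \<integral>\<^sup>+\<omega>. (\<Sum>j. f i j * indicator (A i j) \<omega>) \<partial>M)"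
    by (rule nn_integral_suminf)
       (use A_sets in \<open>auto intro!: borel_measurable_suminf_order borel_measurable_times_ennreal\<close>)
  also have "\<dots> = (\<Sum>i. \<Sum>j. \<integral>\<^sup>+\<omega>. f i j * indicator (A i j) \<omega> \<partial>M)"
    by (intro suminf_cong nn_integral_suminf) (use A_sets in auto)
  also have "\<dots> = (\<Sum>i. \<Sum>j. f i j * emeasure M (A i j))"
    by (intro suminf_cong nn_integral_cmult_indicator A_sets)
  finally show ?thesis unfolding A_def .
qed

lemma has_bochner_integral_pair_count:
  fixes Y Z :: "'a \<Rightarrow> nat" and f :: "nat \<Rightarrow> nat \<Rightarrow> real"
  assumes M: "prob_space M"
    and Y: "Y \<in> M \<rightarrow>\<^sub>M count_space UNIV" and Z: "Z \<in> M \<rightarrow>\<^sub>M count_space UNIV"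
    and nn: "\<And>i j. 0 \<le> f i j"
    and rows: "\<And>i. (\<lambda>j. f i j * measure M {\<omega>\<in>space M. Y \<omega> = i \<and> Z \<omega> = j}) sums r i"
    and total: "r sums S"
  shows "has_bochner_integral M (\<lambda>\<omega>. f (Y \<omega>) (Z \<omega>)) S"
proof -
  interpret prob_space M by (rule M)
  define m where "m i j = measure M {\<omega>\<in>space M. Y \<omega> = i \<and> Z \<omega> = j}" for i j
  have r_nonneg: "0 \<le> r i" for i
    by (rule sums_le[OF _ sums_zero rows[of i]]) (simp add: nn)
  have S_nonneg: "0 \<le> S"
    by (rule sums_le[OF _ sums_zero total]) (simp add: r_nonneg)
  have row_ennreal: "(\<Sum>j. ennreal (f i j * m i j)) = ennreal (r i)" for i
    using suminf_ennreal2[OF mult_nonneg_nonneg[OF nn measure_nonneg] sums_summable[OF rows[of i]]]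
      sums_unique[OF rows[of i]]
    unfolding m_def by simp
  have "(\<integral>\<^sup>+\<omega>. ennreal (f (Y \<omega>) (Z \<omega>)) \<partial>M)
       = (\<Sum>i. \<Sum>j. ennreal (f i j) * emeasure M {\<omega>\<in>space M. Y \<omega> = i \<and> Z \<omega> = j})"
    by (rule nn_integral_pair_count[OF Y Z])
  also have "\<dots> = (\<Sum>i. \<Sum>j. ennreal (f i j * m i j))"
    unfolding m_def emeasure_eq_measure by (simp only: ennreal_mult'[OF nn])
  also have "\<dots> = ennreal S"
    using suminf_ennreal2[OF r_nonneg sums_summable[OF total]] sums_unique[OF total]
    by (simp add: row_ennreal)
  finally have "(\<integral>\<^sup>+\<omega>. ennreal (f (Y \<omega>) (Z \<omega>)) \<partial>M) = ennreal S" .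
  moreover have "(\<lambda>\<omega>. f (Y \<omega>) (Z \<omega>)) \<in> borel_measurable M"
    by (rule measurable_compose_countable'[OF _ Y]) (auto intro: measurable_compose[OF Z])
  ultimately show ?thesis
    by (intro has_bochner_integral_nn_integral S_nonneg) (simp_all add: nn)
qed

lemma covariance_from_moments:
  assumes M: "prob_space M" and f: "has_bochner_integral M f a" and g: "has_bochner_integral M g b"
    and fg: "has_bochner_integral M (\<lambda>\<omega>. f \<omega> * g \<omega>) S"
  shows "covariance M f g = S - a * b"
proof -
  interpret prob_space M by (rule M)
  have means: "integral\<^sup>L M f = a" "integral\<^sup>L M g = b"
    using f g by (auto intro: has_bochner_integral_integral_eq)
  have "has_bochner_integral M (\<lambda>_. a * b) (integral\<^sup>L M (\<lambda>_. a * b))"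
    by (rule has_bochner_integral_integrable) simp
  then have const: "has_bochner_integral M (\<lambda>_. a * b) (a * b)" by (simp add: prob_space)
  have "has_bochner_integral M (\<lambda>\<omega>. f \<omega> * g \<omega> - b * f \<omega> - a * g \<omega> + a * b) (S - b * a - a * b + a * b)"
    by (intro has_bochner_integral_add has_bochner_integral_diff has_bochner_integral_mult_right fg f g const)
  then have "has_bochner_integral M (\<lambda>\<omega>. (f \<omega> - a) * (g \<omega> - b)) (S - a * b)"
    by (rule has_bochner_integral_cong[THEN iffD1, rotated -1]) (simp_all add: algebra_simps)
  then show ?thesis unfolding covariance_def means by (rule has_bochner_integral_integral_eq)
qed

lemma covariance_commute: "covariance M f g = covariance M g f"
  unfolding covariance_def by (simp add: mult.commute)

lemma variance_of_eq_covariance: "variance_of M f = covariance M f f"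
  unfolding variance_of_def covariance_def by (simp add: power2_eq_square)

section \<open>The stationary birth-death process\<close>

locale stationary_birth_death = birth_death +
  fixes M :: "'a measure" and X :: "real \<Rightarrow> 'a \<Rightarrow> nat"
  assumes prob: "prob_space M"
    and stationary: "stationary_markov_process M X (pmf (poisson_pmf (lam / mu))) P"
begin

lemma X_measurable: "X t \<in> M \<rightarrow>\<^sub>M count_space UNIV"
  using stationary unfolding stationary_markov_process_def by blast

lemma two_point_law:
  assumes tau: "\<tau> \<ge> 0"
  shows "measure M {\<omega>\<in>space M. X t \<omega> = i \<and> X (t + \<tau>) \<omega> = j} = stat i * P \<tau> i j"
proof -
  have "measure M {\<omega> \<in> space M. \<forall>k<length [i, j]. X (t + sum_list (take k [\<tau>])) \<omega> = [i, j] ! k}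
      = pmf (poisson_pmf (lam / mu)) ([i, j] ! 0) * (\<Prod>k<length [\<tau>]. P ([\<tau>] ! k) ([i, j] ! k) ([i, j] ! Suc k))"
  proof -
    have "\<forall>t ds ss. (\<forall>d\<in>set ds. 0 \<le> d) \<longrightarrow> length ss = Suc (length ds) \<longrightarrow>
        measure M {\<omega> \<in> space M. \<forall>k<length ss. X (t + sum_list (take k ds)) \<omega> = ss ! k}
          = pmf (poisson_pmf (lam / mu)) (ss ! 0) * (\<Prod>k<length ds. P (ds ! k) (ss ! k) (ss ! Suc k))"
      using stationary unfolding stationary_markov_process_def by blast
    from this[rule_format, of "[\<tau>]" "[i, j]" t] show ?thesis using tau by simp
  qed
  moreover have "{\<omega> \<in> space M. \<forall>k<length [i, j]. X (t + sum_list (take k [\<tau>])) \<omega> = [i, j] ! k}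
      = {\<omega>\<in>space M. X t \<omega> = i \<and> X (t + \<tau>) \<omega> = j}"
    by (auto simp: less_Suc_eq numeral_2_eq_2)
  ultimately show ?thesis using lam_pos mu_pos by (simp add: pmf_poisson_eq_weight del: pmf_poisson)
qed

lemma Lambda_eq: "bd_Lambda lam mu X t \<omega> = exp (- (lam / mu * (exp 1 - 1))) * exp 1 ^ X t \<omega>"
  unfolding bd_Lambda_def by (simp add: exp_diff exp_minus divide_inverse flip: exp_of_nat_mult)

lemma moment_exp_X:
  "has_bochner_integral M (\<lambda>\<omega>. exp 1 ^ X t \<omega>) (exp (lam / mu * (exp 1 - 1)))"
proof -
  have "has_bochner_integral M (\<lambda>\<omega>. (\<lambda>i j. exp 1 ^ i) (X t \<omega>) (X t \<omega>)) (exp (lam / mu * (exp 1 - 1)))"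
  proof (rule has_bochner_integral_pair_count[OF prob X_measurable X_measurable, where f = "\<lambda>i j. exp 1 ^ i"])
    fix i
    have law: "measure M {\<omega>\<in>space M. X t \<omega> = i \<and> X t \<omega> = j} = (if j = i then stat i else 0)" for j
      using two_point_law[of 0 t i j] by (simp add: P_zero)
    have single: "(\<lambda>j. exp 1 ^ i * (if j = i then stat i else 0)) = (\<lambda>j. if j = i then stat i * exp 1 ^ i else 0)"
      by auto
    show "(\<lambda>j. exp 1 ^ i * measure M {\<omega> \<in> space M. X t \<omega> = i \<and> X t \<omega> = j}) sums (stat i * exp 1 ^ i)"
      unfolding law single by (rule sums_single)
  next
    show "(\<lambda>i. stat i * exp 1 ^ i) sums exp (lam / mu * (exp 1 - 1))" by (rule poisson_weight_gf)
  qed simp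
  then show ?thesis by simp
qed

lemma mean_Lambda: "has_bochner_integral M (bd_Lambda lam mu X t) 1"
  using has_bochner_integral_mult_right[OF moment_exp_X, of "exp (- (lam / mu * (exp 1 - 1)))" t]
  by (simp add: Lambda_eq[abs_def] flip: exp_add)

text \<open>Mixed moment of e^X(t) and e^X(t + tau), via the generating function at z = e.\<close>
lemma mixed_moment_exp_X:
  assumes tau: "\<tau> \<ge> 0"
  defines "p \<equiv> exp (- mu * \<tau>)"
  shows "has_bochner_integral M (\<lambda>\<omega>. exp 1 ^ X t \<omega> * exp 1 ^ X (t + \<tau>) \<omega>)
     (exp (lam / mu * (exp 1 * (p * exp 1 + (1 - p)) - 1)) * exp (lam / mu * (1 - p) * (exp 1 - 1)))"
proof (rule has_bochner_integral_pair_count[OF prob X_measurable X_measurable])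
  fix i
  have "(\<lambda>j. (exp 1 ^ i * stat i) * (P \<tau> i j * exp 1 ^ j)) sums ((exp 1 ^ i * stat i) * G (exp 1) \<tau> i)"
    by (rule sums_mult[OF P_gf[OF tau]])
  then show "(\<lambda>j. exp 1 ^ i * exp 1 ^ j * measure M {\<omega> \<in> space M. X t \<omega> = i \<and> X (t + \<tau>) \<omega> = j})
      sums (stat i * (exp 1 * (p * exp 1 + (1 - p))) ^ i * exp (lam / mu * (1 - p) * (exp 1 - 1)))"
    unfolding two_point_law[OF tau] G_thinned_form p_def by (simp add: power_mult_distrib mult_ac)
next
  show "(\<lambda>i. stat i * (exp 1 * (p * exp 1 + (1 - p))) ^ i * exp (lam / mu * (1 - p) * (exp 1 - 1)))
      sums (exp (lam / mu * (exp 1 * (p * exp 1 + (1 - p)) - 1)) * exp (lam / mu * (1 - p) * (exp 1 - 1)))"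
    by (rule sums_mult2[OF poisson_weight_gf])
qed simp

lemma covariance_Lambda_nonneg_lag:
  assumes \<tau>: "\<tau> \<ge> 0"
  shows "covariance M (bd_Lambda lam mu X t) (bd_Lambda lam mu X (t + \<tau>))
     = exp (lam / mu * (exp 1 - 1)^2 * exp (- mu * \<tau>)) - 1"
proof -
  define c where "c = exp (- (lam / mu * (exp 1 - 1)))"
  define p where "p = exp (- mu * \<tau>)"
  define S where "S = exp (lam / mu * (exp 1 * (p * exp 1 + (1 - p)) - 1)) * exp (lam / mu * (1 - p) * (exp 1 - 1))"
  have "has_bochner_integral M (\<lambda>\<omega>. (c * c) * (exp 1 ^ X t \<omega> * exp 1 ^ X (t + \<tau>) \<omega>)) ((c * c) * S)"
    unfolding S_def p_def by (rule has_bochner_integral_mult_right[OF mixed_moment_exp_X[OF \<tau>]])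
  then have "has_bochner_integral M (\<lambda>\<omega>. bd_Lambda lam mu X t \<omega> * bd_Lambda lam mu X (t + \<tau>) \<omega>) (c * c * S)"
    by (simp add: Lambda_eq c_def mult_ac)
  then have "covariance M (bd_Lambda lam mu X t) (bd_Lambda lam mu X (t + \<tau>)) = c * c * S - 1 * 1"
    by (rule covariance_from_moments[OF prob mean_Lambda mean_Lambda])
  also have "c * c * S = exp (lam / mu * (exp 1 - 1)^2 * p)"
  proof -
    define r where "r = lam / mu"
    have "c * c * S = exp (- (r * (exp 1 - 1)) + (- (r * (exp 1 - 1))
        + (r * (exp 1 * (p * exp 1 + (1 - p)) - 1) + r * (1 - p) * (exp 1 - 1))))"
      unfolding c_def S_def r_def by (simp only: mult_exp_exp add.assoc)
    also have "- (r * (exp 1 - 1)) + (- (r * (exp 1 - 1))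
        + (r * (exp 1 * (p * exp 1 + (1 - p)) - 1) + r * (1 - p) * (exp 1 - 1))) = r * (exp 1 - 1)^2 * p"
      by (simp add: algebra_simps power2_eq_square)
    finally show ?thesis unfolding r_def .
  qed
  finally show ?thesis unfolding p_def by simp
qed

text \<open>A negative lag reduces to a positive one by the symmetry of the covariance.\<close>
lemma covariance_Lambda:
  "covariance M (bd_Lambda lam mu X t) (bd_Lambda lam mu X (t + \<tau>))
     = exp (lam / mu * (exp 1 - 1)^2 * exp (- mu * \<bar>\<tau>\<bar>)) - 1"
proof (cases "\<tau> \<ge> 0")
  case True then show ?thesis using covariance_Lambda_nonneg_lag[OF True] by simp
next
  case False
  then have "covariance M (bd_Lambda lam mu X (t + \<tau>)) (bd_Lambda lam mu X (t + \<tau> + - \<tau>))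
     = exp (lam / mu * (exp 1 - 1)^2 * exp (- mu * \<bar>\<tau>\<bar>)) - 1"
    using covariance_Lambda_nonneg_lag[of "- \<tau>" "t + \<tau>"] by simp
  then show ?thesis by (simp add: covariance_commute)
qed

end

theorem mainTheorem5:
  fixes M :: "'a measure" and X :: "real \<Rightarrow> 'a \<Rightarrow> nat"
    and P :: "real \<Rightarrow> nat \<Rightarrow> nat \<Rightarrow> real" and lam mu :: real
  assumes "prob_space M"
    and "lam > 0" and "mu > 0"
    and "is_transition_function_of P (bd_Q lam mu)"
    and "stationary_markov_process M X (pmf (poisson_pmf (lam / mu))) P"
  shows "\<exists>c>0. \<forall>t \<tau>.
           c * exp (- mu * \<bar>\<tau>\<bar>) \<le> covariance M (bd_Lambda lam mu X t) (bd_Lambda lam mu X (t + \<tau>)) \<and>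
           covariance M (bd_Lambda lam mu X t) (bd_Lambda lam mu X (t + \<tau>))
             \<le> variance_of M (bd_Lambda lam mu X 0) * exp (- mu * \<bar>\<tau>\<bar>)"
proof -
  have "stationary_birth_death P lam mu M X"
    unfolding stationary_birth_death_def stationary_birth_death_axioms_def birth_death_def
      birth_death_axioms_def transition_function_def
    using assms by blast
  then interpret stationary_birth_death P lam mu M X .
  define a where "a = lam / mu * (exp 1 - 1)^2"
  have variance: "variance_of M (bd_Lambda lam mu X 0) = exp a - 1"
    using covariance_Lambda[of 0 0] by (simp add: variance_of_eq_covariance a_def)
  show ?thesis
  proof (intro exI[of _ a] conjI allI)
    show "a > 0" unfolding a_def using lam_pos mu_pos by simp
    fix t \<tau> :: real
    define x where "x = exp (- mu * \<bar>\<tau>\<bar>)"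
    have "0 \<le> x" "x \<le> 1" unfolding x_def using mu_pos by auto
    then show "a * exp (- mu * \<bar>\<tau>\<bar>) \<le> covariance M (bd_Lambda lam mu X t) (bd_Lambda lam mu X (t + \<tau>))"
      and "covariance M (bd_Lambda lam mu X t) (bd_Lambda lam mu X (t + \<tau>))
             \<le> variance_of M (bd_Lambda lam mu X 0) * exp (- mu * \<bar>\<tau>\<bar>)"
      unfolding covariance_Lambda variance a_def[symmetric] x_def[symmetric]
      by (rule exp_scaled_minus_one_bounds)+
  qed
qed

end
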